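(* (The translation from $\lambda_{\mathrm{act}}$ to $\lambda_{\mathrm{ch}}$ preserves typing of terms and values.) (1) If $\Gamma \vdash V : A$ in $\lambda_{\mathrm{act}}$, then $[\![\Gamma]\!] \vdash [\![V]\!] : [\![A]\!]$ in $\lambda_{\mathrm{ch}}$. (2) If $\Gamma \mid B \vdash M : A$ in $\lambda_{\mathrm{act}}$, then $[\![\Gamma]\!], \alpha : \mathsf{Chan}([\![B]\!]) \vdash [\![M]\!]\alpha : [\![A]\!]$ in $\lambda_{\mathrm{ch}}$ (for $\alpha$ a variable or name not in $\Gamma$).
   Context: $\lambda_{\mathrm{ch}}$: types $A,B ::= \mathbf{1}\mid A\to B\mid\mathsf{Chan}(A)$; values $V ::= \alpha\mid\lambda x.M\mid()$ ($\alpha$ a variable or name); computations $M ::= V\,W\mid\mathbf{let}\ x\Leftarrow M\ \mathbf{in}\ N\mid\mathbf{return}\ V\mid\mathbf{fork}\ M\mid\mathbf{give}\ V\ W\mid\mathbf{take}\ V\mid\mathbf{newCh}$; typing $\Gamma\vdash M:A$: simple typing for variables/names, $\lambda$, application, $\mathbf{let}$ ($\Gamma\vdash M:A$, $\Gamma,x:A\vdash N:B$), $\mathbf{return}\ V:A$ for $V:A$, $():\mathbf 1$; $\mathbf{give}\ V\ W:\mathbf 1$ if $V:A$, $W:\mathsf{Chan}(A)$; $\mathbf{take}\ V:A$ if $V:\mathsf{Chan}(A)$; $\mathbf{fork}\ M:\mathbf 1$ if $M:\mathbf 1$; $\mathbf{newCh}:\mathsf{Chan}(A)$ for any $A$. $\lambda_{\mathrm{act}}$: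 types $A,B,C ::= \mathbf{1}\mid A\xrightarrow{C}B\mid\mathsf{ActorRef}(A)$; values as in $\lambda_{\mathrm{ch}}$; computations $M ::= V\,W\mid\mathbf{let}\ x\Leftarrow M\ \mathbf{in}\ N\mid\mathbf{return}\ V\mid\mathbf{spawn}\ M\mid\mathbf{send}\ V\ W\mid\mathbf{receive}\mid\mathbf{self}$. Value typing: $\alpha:A$ if $\alpha:A\in\Gamma$; $\Gamma\vdash\lambda x.M:A\xrightarrow{C}B$ if $\Gamma,x:A\mid C\vdash M:B$; $():\mathbf 1$. Computation typing $\Gamma\mid C\vdash M:A$: $V\,W:B$ if $V:A\xrightarrow{C}B$, $W:A$; $\mathbf{let}$ with both parts under mailbox type $C$; $\mathbf{return}\ V:A$ if $V:A$; $\mathbf{send}\ V\ W:\mathbf 1$ if $V:A$, $W:\mathsf{ActorRef}(A)$; $\Gamma\mid A\vdash\mathbf{receive}:A$; $\Gamma\mid C\vdash\mathbf{spawn}\ M:\mathsf{ActorRef}(A)$ if $\Gamma\mid A\vdash M:\mathbf 1$; $\Gamma\mid A\vdash\mathbf{self}:\mathsf{ActorRef}(A)$. The translation $[\![-]\!]$ from $\lambda_{\mathrm{act}}$ into $\lambda_{\mathrm{ch}}$: on types, $[\![\mathsf{ActorRef}(A)]\!]=\mathsf{Chan}([\![A]\!])$, $[\![A\xrightarrow{C}B]\!]=[\![A]\!]\to\mathsf{Chan}([\![C]\!])\to[\![B]\!]$, $[\![\mathbf 1]\!]=\mathbf 1$; on environments pointwise, $[\![\alpha_1:A_1,\ldots,\alpha_n:A_n]\!]=\alpha_1:[\![A_1]\!],\ldots,\alpha_n:[\![A_n]\!]$;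 on values, $[\![x]\!]=x$, $[\![a]\!]=a$, $[\![()]\!]=()$, $[\![\lambda x.M]\!]=\lambda x.\lambda ch.([\![M]\!]ch)$. On computations, parameterised by a channel $ch$ (the emulated mailbox): $[\![\mathbf{let}\ x\Leftarrow M\ \mathbf{in}\ N]\!]ch=\mathbf{let}\ x\Leftarrow[\![M]\!]ch\ \mathbf{in}\ [\![N]\!]ch$; $[\![V\,W]\!]ch=\mathbf{let}\ f\Leftarrow([\![V]\!]\,[\![W]\!])\ \mathbf{in}\ f\,ch$; $[\![\mathbf{return}\ V]\!]ch=\mathbf{return}\ [\![V]\!]$; $[\![\mathbf{self}]\!]ch=\mathbf{return}\ ch$; $[\![\mathbf{receive}]\!]ch=\mathbf{take}\ ch$; $[\![\mathbf{spawn}\ M]\!]ch=\mathbf{let}\ chMb\Leftarrow\mathbf{newCh}\ \mathbf{in}\ \mathbf{fork}([\![M]\!]chMb);\ \mathbf{return}\ chMb$; $[\![\mathbf{send}\ V\ W]\!]ch=\mathbf{give}\ [\![V]\!]\ [\![W]\!]$. Here $M;N$ abbreviates $\mathbf{let}\ y\Leftarrow M\ \mathbf{in}\ N$ with $y$ fresh. *)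

theory Defs
  imports Main
begin

text \<open>Identifiers: variables and (channel/actor) names share one infinite namespace.\<close>
type_synonym var = nat

definition fresh :: "var set \<Rightarrow> var" where
  "fresh S = (LEAST n. n \<notin> S)"

datatype cty = CUnit | CFun cty cty | Chan cty

datatype cval = CVar var | CLam var ccomp | CUnitV
and ccomp = CApp cval cval | CLet var ccomp ccomp | CReturn cval | Fork ccomp
  | Give cval cval | Take cval | NewCh

type_synonym cenv = "var \<Rightarrow> cty option"

inductive ch_vt :: "cenv \<Rightarrow> cval \<Rightarrow> cty \<Rightarrow> bool"
and ch_ct :: "cenv \<Rightarrow> ccomp \<Rightarrow> cty \<Rightarrow> bool" where
  CT_Var: "\<Gamma> x = Some A \<Longrightarrow> ch_vt \<Gamma> (CVar x) A"
| CT_Lam: "ch_ct (\<Gamma>(x \<mapsto> A)) M B \<Longrightarrow> ch_vt \<Gamma> (CLam x M) (CFun A B)"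
| CT_Unit: "ch_vt \<Gamma> CUnitV CUnit"
| CT_App: "ch_vt \<Gamma> V (CFun A B) \<Longrightarrow> ch_vt \<Gamma> W A \<Longrightarrow> ch_ct \<Gamma> (CApp V W) B"
| CT_Let: "ch_ct \<Gamma> M A \<Longrightarrow> ch_ct (\<Gamma>(x \<mapsto> A)) N B \<Longrightarrow> ch_ct \<Gamma> (CLet x M N) B"
| CT_Return: "ch_vt \<Gamma> V A \<Longrightarrow> ch_ct \<Gamma> (CReturn V) A"
| CT_Fork: "ch_ct \<Gamma> M CUnit \<Longrightarrow> ch_ct \<Gamma> (Fork M) CUnit"
| CT_Give: "ch_vt \<Gamma> V A \<Longrightarrow> ch_vt \<Gamma> W (Chan A) \<Longrightarrow> ch_ct \<Gamma> (Give V W) CUnit"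
| CT_Take: "ch_vt \<Gamma> V (Chan A) \<Longrightarrow> ch_ct \<Gamma> (Take V) A"
| CT_NewCh: "ch_ct \<Gamma> NewCh (Chan A)"

text \<open>AFun A C B is the function type A -C-> B (C = mailbox type of the body).\<close>
datatype aty = AUnit | AFun aty aty aty | ActorRef aty

datatype aval = AVar var | ALam var acomp | AUnitV
and acomp = AApp aval aval | ALet var acomp acomp | AReturn aval | Spawn acomp
  | Send aval aval | Receive | Self

type_synonym aenv = "var \<Rightarrow> aty option"

inductive act_vt :: "aenv \<Rightarrow> aval \<Rightarrow> aty \<Rightarrow> bool"
and act_ct :: "aenv \<Rightarrow> aty \<Rightarrow> acomp \<Rightarrow> aty \<Rightarrow> bool" where
  AT_Var: "\<Gamma> x = Some A \<Longrightarrow> act_vt \<Gamma> (AVar x) A"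
| AT_Lam: "act_ct (\<Gamma>(x \<mapsto> A)) C M B \<Longrightarrow> act_vt \<Gamma> (ALam x M) (AFun A C B)"
| AT_Unit: "act_vt \<Gamma> AUnitV AUnit"
| AT_App: "act_vt \<Gamma> V (AFun A C B) \<Longrightarrow> act_vt \<Gamma> W A \<Longrightarrow> act_ct \<Gamma> C (AApp V W) B"
| AT_Let: "act_ct \<Gamma> C M A \<Longrightarrow> act_ct (\<Gamma>(x \<mapsto> A)) C N B \<Longrightarrow> act_ct \<Gamma> C (ALet x M N) B"
| AT_Return: "act_vt \<Gamma> V A \<Longrightarrow> act_ct \<Gamma> C (AReturn V) A"
| AT_Send: "act_vt \<Gamma> V A \<Longrightarrow> act_vt \<Gamma> W (ActorRef A) \<Longrightarrow> act_ct \<Gamma> C (Send V W) AUnit"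
| AT_Receive: "act_ct \<Gamma> A Receive A"
| AT_Spawn: "act_ct \<Gamma> A M AUnit \<Longrightarrow> act_ct \<Gamma> C (Spawn M) (ActorRef A)"
| AT_Self: "act_ct \<Gamma> A Self (ActorRef A)"

primrec avars_v :: "aval \<Rightarrow> var set" and avars_c :: "acomp \<Rightarrow> var set" where
  "avars_v (AVar x) = {x}"
| "avars_v (ALam x M) = insert x (avars_c M)"
| "avars_v AUnitV = {}"
| "avars_c (AApp V W) = avars_v V \<union> avars_v W"
| "avars_c (ALet x M N) = insert x (avars_c M \<union> avars_c N)"
| "avars_c (AReturn V) = avars_v V"
| "avars_c (Spawn M) = avars_c M"
| "avars_c (Send V W) = avars_v V \<union> avars_v W"
| "avars_c Receive = {}"
| "avars_c Self = {}"

primrec abound_v :: "aval \<Rightarrow> var set" and abound_c :: "acomp \<Rightarrow> var set" where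
  "abound_v (AVar x) = {}"
| "abound_v (ALam x M) = insert x (abound_c M)"
| "abound_v AUnitV = {}"
| "abound_c (AApp V W) = abound_v V \<union> abound_v W"
| "abound_c (ALet x M N) = insert x (abound_c M \<union> abound_c N)"
| "abound_c (AReturn V) = abound_v V"
| "abound_c (Spawn M) = abound_c M"
| "abound_c (Send V W) = abound_v V \<union> abound_v W"
| "abound_c Receive = {}"
| "abound_c Self = {}"

primrec tr_ty :: "aty \<Rightarrow> cty" where
  "tr_ty AUnit = CUnit"
| "tr_ty (AFun A C B) = CFun (tr_ty A) (CFun (Chan (tr_ty C)) (tr_ty B))"
| "tr_ty (ActorRef A) = Chan (tr_ty A)"

definition tr_env :: "aenv \<Rightarrow> cenv" where
  "tr_env \<Gamma> = (\<lambda>x. map_option tr_ty (\<Gamma> x))"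

text \<open>In fine-grain call-by-value, the curried value lambda x. lambda ch. M is
  lambda x. return (lambda ch. M).  Auxiliary bound names (ch, f, chMb, y) are chosen fresh.\<close>
primrec tr_v :: "aval \<Rightarrow> cval" and tr_c :: "acomp \<Rightarrow> var \<Rightarrow> ccomp" where
  "tr_v (AVar x) = CVar x"
| "tr_v (ALam x M) =
     (let c = fresh (insert x (avars_c M)) in CLam x (CReturn (CLam c (tr_c M c))))"
| "tr_v AUnitV = CUnitV"
| "tr_c (AApp V W) ch =
     (let f = fresh (insert ch (avars_v V \<union> avars_v W)) in
      CLet f (CApp (tr_v V) (tr_v W)) (CApp (CVar f) (CVar ch)))"
| "tr_c (ALet x M N) ch = CLet x (tr_c M ch) (tr_c N ch)"
| "tr_c (AReturn V) ch = CReturn (tr_v V)"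
| "tr_c (Spawn M) ch =
     (let mb = fresh (insert ch (avars_c M)); y = fresh {mb} in
      CLet mb NewCh (CLet y (Fork (tr_c M mb)) (CReturn (CVar mb))))"
| "tr_c (Send V W) ch = Give (tr_v V) (tr_v W)"
| "tr_c Receive ch = Take (CVar ch)"
| "tr_c Self ch = CReturn (CVar ch)"

end

(* The claim is generalised to any lambda_ch
   environment that agrees with the translated environment on the variables of the term, and in
   which the mailbox name has type Chan [B]: the auxiliary names chosen by the translation are
   fresh only for the term, not for the environment, so they may shadow entries of it. *)

theory Submission
  imports Defs
begin

lemma fresh_notin: "finite S \<Longrightarrow> fresh S \<notin> S"
  unfolding fresh_def by (metis LeastI_ex ex_new_if_finite infinite_UNIV_nat)

lemma finite_avars: "finite (avars_v V)" "finite (avars_c M)"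
  by (induction V and M) auto

lemma abound_subset_avars: "abound_v V \<subseteq> avars_v V" "abound_c M \<subseteq> avars_c M"
  by (induction V and M) auto

lemma tr_env_upd: "tr_env (\<Gamma>(x \<mapsto> A)) = (tr_env \<Gamma>)(x \<mapsto> tr_ty A)"
  by (auto simp: tr_env_def)

lemma restrict_map_le_Un_iff [simp]:
  "m |` (S \<union> S') \<subseteq>\<^sub>m \<Delta> \<longleftrightarrow> m |` S \<subseteq>\<^sub>m \<Delta> \<and> m |` S' \<subseteq>\<^sub>m \<Delta>"
  by (auto simp: map_le_def)

lemma restrict_map_le_insert_iff [simp]:
  "m |` insert x S \<subseteq>\<^sub>m \<Delta> \<longleftrightarrow> (x \<in> dom m \<longrightarrow> \<Delta> x = m x) \<and> m |` S \<subseteq>\<^sub>m \<Delta>"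
  unfolding map_le_def by (auto simp: restrict_map_def split: if_splits)

lemma restrict_map_le_upd_outside:
  "m |` S \<subseteq>\<^sub>m \<Delta> \<Longrightarrow> y \<notin> S \<Longrightarrow> m |` S \<subseteq>\<^sub>m \<Delta>(y \<mapsto> T)"
  by (auto simp: map_le_def)

lemma restrict_map_le_upd: "m |` S \<subseteq>\<^sub>m \<Delta> \<Longrightarrow> m(x \<mapsto> T) |` S \<subseteq>\<^sub>m \<Delta>(x \<mapsto> T)"
  by (auto simp: map_le_def restrict_map_def split: if_splits)

lemma ch_typing_tr:
  "act_vt \<Gamma> V A \<Longrightarrow> tr_env \<Gamma> |` avars_v V \<subseteq>\<^sub>m \<Delta> \<Longrightarrow> ch_vt \<Delta> (tr_v V) (tr_ty A)"
  "act_ct \<Gamma> B M A \<Longrightarrow> tr_env \<Gamma> |` avars_c M \<subseteq>\<^sub>m \<Delta> \<Longrightarrow> \<Delta> \<alpha> = Some (Chan (tr_ty B))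
    \<Longrightarrow> \<alpha> \<notin> abound_c M \<Longrightarrow> ch_ct \<Delta> (tr_c M \<alpha>) (tr_ty A)"
proof (induction arbitrary: \<Delta> and \<Delta> \<alpha> rule: act_vt_act_ct.inducts)
  case (AT_Var \<Gamma> x A)
  then show ?case by (force intro!: CT_Var simp: map_le_def tr_env_def)
next
  case (AT_Lam \<Gamma> x A C M B)
  define c where "c = fresh (insert x (avars_c M))"
  have c: "c \<notin> insert x (avars_c M)"
    unfolding c_def by (rule fresh_notin) (simp add: finite_avars)
  have "tr_env \<Gamma> |` avars_c M \<subseteq>\<^sub>m \<Delta>"
    using AT_Lam.prems by simp
  then have "tr_env (\<Gamma>(x \<mapsto> A)) |` avars_c M \<subseteq>\<^sub>m \<Delta>(x \<mapsto> tr_ty A)"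
    unfolding tr_env_upd by (rule restrict_map_le_upd)
  then have env: "tr_env (\<Gamma>(x \<mapsto> A)) |` avars_c M \<subseteq>\<^sub>m \<Delta>(x \<mapsto> tr_ty A, c \<mapsto> Chan (tr_ty C))"
    by (rule restrict_map_le_upd_outside) (use c in simp)
  have "c \<notin> abound_c M"
    using c abound_subset_avars(2) by blast
  then have "ch_ct (\<Delta>(x \<mapsto> tr_ty A, c \<mapsto> Chan (tr_ty C))) (tr_c M c) (tr_ty B)"
    by (intro AT_Lam.IH[OF env]) simp_all
  then show ?case
    by (auto simp: c_def[symmetric] Let_def intro!: CT_Lam CT_Return)
next
  case (AT_Unit \<Gamma>)
  then show ?case by (auto intro: CT_Unit)
next
  case (AT_App \<Gamma> V A C B W)
  define f where "f = fresh (insert \<alpha> (avars_v V \<union> avars_v W))"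
  have f: "f \<notin> insert \<alpha> (avars_v V \<union> avars_v W)"
    unfolding f_def by (rule fresh_notin) (simp add: finite_avars)
  have "ch_vt \<Delta> (tr_v V) (CFun (tr_ty A) (CFun (Chan (tr_ty C)) (tr_ty B)))"
    using AT_App by simp
  moreover have "ch_vt \<Delta> (tr_v W) (tr_ty A)"
    using AT_App by simp
  ultimately show ?case
    using f AT_App.prems(2)
    by (auto simp: f_def[symmetric] Let_def intro!: CT_Let CT_App CT_Var)
next
  case (AT_Let \<Gamma> C M A x N B)
  have "ch_ct \<Delta> (tr_c M \<alpha>) (tr_ty A)"
    using AT_Let by simp
  moreover have "tr_env \<Gamma> |` avars_c N \<subseteq>\<^sub>m \<Delta>"
    using AT_Let.prems(1) by simp
  then have env: "tr_env (\<Gamma>(x \<mapsto> A)) |` avars_c N \<subseteq>\<^sub>m \<Delta>(x \<mapsto> tr_ty A)"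
    unfolding tr_env_upd by (rule restrict_map_le_upd)
  have "ch_ct (\<Delta>(x \<mapsto> tr_ty A)) (tr_c N \<alpha>) (tr_ty B)"
    using AT_Let.prems(2,3) by (intro AT_Let.IH(2)[OF env]) auto
  ultimately show ?case by (auto intro!: CT_Let)
next
  case (AT_Return \<Gamma> V A C)
  then show ?case by (auto intro!: CT_Return)
next
  case (AT_Send \<Gamma> V A W C)
  then show ?case by (auto intro!: CT_Give)
next
  case (AT_Receive \<Gamma> A)
  then show ?case by (auto intro!: CT_Take CT_Var)
next
  case (AT_Spawn \<Gamma> A M C)
  define mb where "mb = fresh (insert \<alpha> (avars_c M))"
  have mb: "mb \<notin> insert \<alpha> (avars_c M)"
    unfolding mb_def by (rule fresh_notin) (simp add: finite_avars)
  define y where "y = fresh {mb}"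
  have y: "y \<noteq> mb"
    unfolding y_def using fresh_notin[of "{mb}"] by auto
  have "tr_env \<Gamma> |` avars_c M \<subseteq>\<^sub>m \<Delta>"
    using AT_Spawn.prems(1) by simp
  then have env: "tr_env \<Gamma> |` avars_c M \<subseteq>\<^sub>m \<Delta>(mb \<mapsto> Chan (tr_ty A))"
    by (rule restrict_map_le_upd_outside) (use mb in simp)
  have "mb \<notin> abound_c M"
    using mb abound_subset_avars(2) by blast
  then have "ch_ct (\<Delta>(mb \<mapsto> Chan (tr_ty A))) (tr_c M mb) (tr_ty AUnit)"
    by (intro AT_Spawn.IH[OF env]) simp_all
  then show ?case
    using y by (auto simp: mb_def[symmetric] y_def[symmetric] Let_def
        intro!: CT_Let CT_NewCh CT_Fork CT_Return CT_Var)
next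
  case (AT_Self \<Gamma> A)
  then show ?case by (auto intro!: CT_Return CT_Var)
qed

theorem lemma17:
  shows "(\<forall>\<Gamma> V A. act_vt \<Gamma> V A \<longrightarrow> ch_vt (tr_env \<Gamma>) (tr_v V) (tr_ty A))
       \<and> (\<forall>\<Gamma> B M A \<alpha>. act_ct \<Gamma> B M A \<and> \<Gamma> \<alpha> = None \<and> \<alpha> \<notin> abound_c M \<longrightarrow>
            ch_ct ((tr_env \<Gamma>)(\<alpha> \<mapsto> Chan (tr_ty B))) (tr_c M \<alpha>) (tr_ty A))"
proof (intro conjI allI impI)
  show "ch_vt (tr_env \<Gamma>) (tr_v V) (tr_ty A)" if "act_vt \<Gamma> V A" for \<Gamma> V A
    using ch_typing_tr(1)[OF that] by (simp add: map_le_def)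
next
  fix \<Gamma> B M A \<alpha>
  assume "act_ct \<Gamma> B M A \<and> \<Gamma> \<alpha> = None \<and> \<alpha> \<notin> abound_c M"
  then have typed: "act_ct \<Gamma> B M A" and "\<Gamma> \<alpha> = None" and "\<alpha> \<notin> abound_c M"
    by simp_all
  then have "tr_env \<Gamma> |` avars_c M \<subseteq>\<^sub>m (tr_env \<Gamma>)(\<alpha> \<mapsto> Chan (tr_ty B))"
    by (auto simp: map_le_def tr_env_def)
  with typed \<open>\<alpha> \<notin> abound_c M\<close>
  show "ch_ct ((tr_env \<Gamma>)(\<alpha> \<mapsto> Chan (tr_ty B))) (tr_c M \<alpha>) (tr_ty A)"
    by (intro ch_typing_tr(2)) simp_all
qed

end
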